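(* No distribution $p\in\operatorname{RBM}_{3,2}$ has four modes; that is, there is no $p\in\operatorname{RBM}_{3,2}$ and set $S\subseteq\{0,1\}^3$ of four states such that for every $x\in S$ and every Hamming neighbour $y$ of $x$ one has $p_x>p_y$.
   Context: A distribution of three binary random variables is a $2\times2\times2$ tensor $p=(p_x)_{x\in\{0,1\}^3}$ with nonnegative entries summing to $1$; the set of these is $\Delta_7$. Two states in $\{0,1\}^3$ are Hamming neighbours if they differ in exactly one coordinate. A mode of $p$ is a state $x$ with $p_x>p_y$ for every Hamming neighbour $y$ of $x$. For $a,b,c\in\mathbb{R}^2_{\ge0}$, $a\otimes b\otimes c$ is the tensor with entries $a_ib_jc_k$. $\operatorname{RBM}_{3,2}$ is the set of $p\in\Delta_7$ of the form $p=(a_1\otimes b_1\otimes c_1+d_1\otimes e_1\otimes f_1)*(a_2\otimes b_2\otimes c_2+d_2\otimes e_2\otimes f_2)$ with all vectors in $\mathbb{R}^2_{\ge0}$, where $*$ is the entrywise (Hadamard) product. *)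

theory Defs
  imports Complex_Main
begin

text \<open>States of three binary variables: bool \<times> bool \<times> bool (False = 0, True = 1).
 Vectors in R^2 are functions bool \<Rightarrow> real.\<close>

type_synonym state = "bool \<times> bool \<times> bool"

definition simplex7 :: "(state \<Rightarrow> real) set" where
  "simplex7 = {p. (\<forall>x. 0 \<le> p x) \<and> (\<Sum>x\<in>UNIV. p x) = 1}"

definition hamming_nb :: "state \<Rightarrow> state \<Rightarrow> bool" where
  "hamming_nb x y \<longleftrightarrow>
     (case x of (x1, x2, x3) \<Rightarrow> case y of (y1, y2, y3) \<Rightarrow>
       (if x1 \<noteq> y1 then 1 else 0) + (if x2 \<noteq> y2 then 1 else 0)
       + (if x3 \<noteq> y3 then 1 else (0::nat)) = 1)"

definition is_mode :: "(state \<Rightarrow> real) \<Rightarrow> state \<Rightarrow> bool" where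
  "is_mode p x \<longleftrightarrow> (\<forall>y. hamming_nb x y \<longrightarrow> p x > p y)"

definition nonneg2 :: "(bool \<Rightarrow> real) \<Rightarrow> bool" where
  "nonneg2 v \<longleftrightarrow> (\<forall>i. 0 \<le> v i)"

definition tens3 :: "(bool \<Rightarrow> real) \<Rightarrow> (bool \<Rightarrow> real) \<Rightarrow> (bool \<Rightarrow> real) \<Rightarrow> state \<Rightarrow> real" where
  "tens3 a b c = (\<lambda>(i, j, k). a i * b j * c k)"

definition RBM32 :: "(state \<Rightarrow> real) set" where
  "RBM32 = {p \<in> simplex7. \<exists>a1 b1 c1 d1 e1 f1 a2 b2 c2 d2 e2 f2.
      nonneg2 a1 \<and> nonneg2 b1 \<and> nonneg2 c1 \<and> nonneg2 d1 \<and> nonneg2 e1 \<and> nonneg2 f1 \<and>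
      nonneg2 a2 \<and> nonneg2 b2 \<and> nonneg2 c2 \<and> nonneg2 d2 \<and> nonneg2 e2 \<and> nonneg2 f2 \<and>
      p = (\<lambda>x. (tens3 a1 b1 c1 x + tens3 d1 e1 f1 x) * (tens3 a2 b2 c2 x + tens3 d2 e2 f2 x))}"

end

theory Submission
  imports Defs
begin

text \<open>Modes are never adjacent, and four pairwise non-adjacent states of the cube form a
  parity class. Hence in every 2\<times>2 slice of the tensor, in each of the three directions, one
  diagonal consists of modes and the other of non-modes, so the minors of two parallel slices
  have opposite signs. For a rank-two factor a\<otimes>b\<otimes>c + d\<otimes>e\<otimes>f the minor of the k-th slice along
  the third axis is c_k f_k det(a,d) det(b,e), whose sign does not depend on k; since Hadamard
  products of nonnegative 2\<times>2 matrices with minors of equal sign keep that sign, the two factors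
  of the RBM must have opposite signs of det(a,d) det(b,e). Doing this along all three axes
  gives three negative products whose product is a square, a contradiction.\<close>

definition det2 :: "(bool \<Rightarrow> real) \<Rightarrow> (bool \<Rightarrow> real) \<Rightarrow> real" where
  "det2 u v = u False * v True - u True * v False"

definition slice_minor :: "(state \<Rightarrow> real) \<Rightarrow> bool \<Rightarrow> real" where
  "slice_minor p k = det2 (\<lambda>i. p (i, False, k)) (\<lambda>i. p (i, True, k))"

definition rank2_tensor ::
  "(bool \<Rightarrow> real) \<Rightarrow> (bool \<Rightarrow> real) \<Rightarrow> (bool \<Rightarrow> real) \<Rightarrow>
   (bool \<Rightarrow> real) \<Rightarrow> (bool \<Rightarrow> real) \<Rightarrow> (bool \<Rightarrow> real) \<Rightarrow> state \<Rightarrow> real" where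
  "rank2_tensor a b c d e f x = tens3 a b c x + tens3 d e f x"

fun parity :: "state \<Rightarrow> bool" where
  "parity (i, j, k) = ((i \<noteq> j) \<noteq> k)"

fun antipode :: "state \<Rightarrow> state" where
  "antipode (i, j, k) = (\<not> i, \<not> j, \<not> k)"

fun rotate3 :: "state \<Rightarrow> state" where
  "rotate3 (i, j, k) = (j, k, i)"

lemma antipode_antipode [simp]: "antipode (antipode x) = x"
  by (cases x) simp

lemma det2_swap: "det2 v u = - det2 u v"
  by (simp add: det2_def)

lemma det2_pos_of_diagonal_dominance:
  assumes "0 \<le> u True" "0 \<le> v False" "u True < u False" "v False < v True"
  shows "0 < det2 u v"
proof -
  have "u True * v False \<le> u True * v True"
    using assms(1,4) by (simp add: mult_left_mono)
  also have "\<dots> < u False * v True"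
    using assms(2-4) by simp
  finally show ?thesis
    by (simp add: det2_def)
qed

lemma det2_mult_nonneg:
  assumes "\<And>i. 0 \<le> u i" "\<And>i. 0 \<le> v i" "\<And>i. 0 \<le> u' i" "\<And>i. 0 \<le> v' i"
    and "0 \<le> det2 u v" "0 \<le> det2 u' v'"
  shows "0 \<le> det2 (\<lambda>i. u i * u' i) (\<lambda>i. v i * v' i)"
proof -
  have "u True * v False \<le> u False * v True" "u' True * v' False \<le> u' False * v' True"
    using assms(5,6) by (simp_all add: det2_def)
  from mult_mono[OF this] have
    "(u True * v False) * (u' True * v' False) \<le> (u False * v True) * (u' False * v' True)"
    by (simp add: assms(1-4))
  then show ?thesis
    by (simp add: det2_def algebra_simps)
qed

lemma det2_mult_nonpos:
  assumes "\<And>i. 0 \<le> u i" "\<And>i. 0 \<le> v i" "\<And>i. 0 \<le> u' i" "\<And>i. 0 \<le> v' i"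
    and "det2 u v \<le> 0" "det2 u' v' \<le> 0"
  shows "det2 (\<lambda>i. u i * u' i) (\<lambda>i. v i * v' i) \<le> 0"
proof -
  have "0 \<le> det2 v u" "0 \<le> det2 v' u'"
    using assms(5,6) det2_swap[of v u] det2_swap[of v' u'] by linarith+
  from det2_mult_nonneg[OF assms(2,1,4,3) this] show ?thesis
    using det2_swap[of "\<lambda>i. v i * v' i" "\<lambda>i. u i * u' i"] by linarith
qed

lemma pairwise_products_not_all_neg:
  fixes x y z x' y' z' :: real
  assumes "(x * y) * (x' * y') < 0" "(z * x) * (z' * x') < 0" "(y * z) * (y' * z') < 0"
  shows False
proof -
  have "((x * y) * (x' * y')) * ((z * x) * (z' * x')) * ((y * z) * (y' * z')) < 0"
    using assms by (meson mult_neg_neg mult_pos_neg)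
  moreover have "((x * y) * (x' * y')) * ((z * x) * (z' * x')) * ((y * z) * (y' * z'))
      = (x * y * z * x' * y' * z')\<^sup>2"
    by (simp add: power2_eq_square algebra_simps)
  ultimately show False
    by (metis not_less zero_le_power2)
qed

lemma slice_minor_rank2_tensor:
  "slice_minor (rank2_tensor a b c d e f) k = c k * f k * (det2 a d * det2 b e)"
  by (simp add: slice_minor_def rank2_tensor_def tens3_def det2_def algebra_simps)

lemma rank2_tensor_nonneg:
  assumes "nonneg2 a" "nonneg2 b" "nonneg2 c" "nonneg2 d" "nonneg2 e" "nonneg2 f"
  shows "0 \<le> rank2_tensor a b c d e f x"
  using assms unfolding rank2_tensor_def tens3_def nonneg2_def
  by (auto split: prod.split)

lemma rank2_tensor_rotate3:
  "rank2_tensor a b c d e f (rotate3 x) = rank2_tensor c a b f d e x"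
  by (cases x) (simp add: rank2_tensor_def tens3_def)

lemma product_slice_minors_opposite_signs:
  assumes nonneg: "\<forall>v\<in>{a1, b1, c1, d1, e1, f1, a2, b2, c2, d2, e2, f2}. nonneg2 v"
    and p: "\<And>x. p x = rank2_tensor a1 b1 c1 d1 e1 f1 x * rank2_tensor a2 b2 c2 d2 e2 f2 x"
    and pos: "0 < slice_minor p s" and neg: "slice_minor p t < 0"
  shows "(det2 a1 d1 * det2 b1 e1) * (det2 a2 d2 * det2 b2 e2) < 0"
proof (rule ccontr)
  define q1 where "q1 = rank2_tensor a1 b1 c1 d1 e1 f1"
  define q2 where "q2 = rank2_tensor a2 b2 c2 d2 e2 f2"
  define \<sigma>1 where "\<sigma>1 = det2 a1 d1 * det2 b1 e1"
  define \<sigma>2 where "\<sigma>2 = det2 a2 d2 * det2 b2 e2"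
  have q_nonneg: "0 \<le> q1 x" "0 \<le> q2 x" for x
    using nonneg by (simp_all add: q1_def q2_def rank2_tensor_nonneg)
  have weights: "0 \<le> c1 k * f1 k" "0 \<le> c2 k * f2 k" for k
    using nonneg by (simp_all add: nonneg2_def)
  have minors: "slice_minor q1 k = c1 k * f1 k * \<sigma>1" "slice_minor q2 k = c2 k * f2 k * \<sigma>2" for k
    by (simp_all add: q1_def q2_def \<sigma>1_def \<sigma>2_def slice_minor_rank2_tensor)
  have p_minor: "slice_minor p k = det2 (\<lambda>i. q1 (i, False, k) * q2 (i, False, k))
      (\<lambda>i. q1 (i, True, k) * q2 (i, True, k))" for k
    by (simp add: slice_minor_def p q1_def q2_def)
  assume "\<not> ?thesis"
  then have "0 \<le> \<sigma>1 * \<sigma>2"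
    by (simp add: \<sigma>1_def \<sigma>2_def)
  then have "(0 \<le> \<sigma>1 \<and> 0 \<le> \<sigma>2) \<or> (\<sigma>1 \<le> 0 \<and> \<sigma>2 \<le> 0)"
    by (simp add: zero_le_mult_iff)
  then show False
  proof
    assume "0 \<le> \<sigma>1 \<and> 0 \<le> \<sigma>2"
    then have minors_t: "0 \<le> slice_minor q1 t" "0 \<le> slice_minor q2 t"
      by (simp_all add: minors weights)
    have "0 \<le> slice_minor p t"
      unfolding p_minor
      by (rule det2_mult_nonneg[OF _ _ _ _ minors_t[unfolded slice_minor_def]]) (rule q_nonneg)+
    with neg show False by simp
  next
    assume "\<sigma>1 \<le> 0 \<and> \<sigma>2 \<le> 0"
    then have minors_s: "slice_minor q1 s \<le> 0" "slice_minor q2 s \<le> 0"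
      by (simp_all add: minors weights mult_nonneg_nonpos)
    have "slice_minor p s \<le> 0"
      unfolding p_minor
      by (rule det2_mult_nonpos[OF _ _ _ _ minors_s[unfolded slice_minor_def]]) (rule q_nonneg)+
    with pos show False by simp
  qed
qed

lemma hamming_nb_sym: "hamming_nb x y \<Longrightarrow> hamming_nb y x"
  by (cases x; cases y) (auto simp: hamming_nb_def split: if_splits)

lemma hamming_nb_rotate3: "hamming_nb (rotate3 x) (rotate3 y) = hamming_nb x y"
  by (cases x; cases y) (auto simp: hamming_nb_def)

lemma parity_rotate3 [simp]: "parity (rotate3 x) = parity x"
  by (cases x) auto

lemma modes_not_adjacent: "is_mode p x \<Longrightarrow> is_mode p y \<Longrightarrow> \<not> hamming_nb x y"
  using hamming_nb_sym less_asym unfolding is_mode_def by blast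

lemma is_mode_rotate3:
  assumes "is_mode p (rotate3 x)"
  shows "is_mode (p \<circ> rotate3) x"
  unfolding is_mode_def
proof (intro allI impI)
  fix y assume "hamming_nb x y"
  then show "(p \<circ> rotate3) y < (p \<circ> rotate3) x"
    using assms hamming_nb_rotate3[of x y] unfolding is_mode_def comp_apply by blast
qed

lemma parity_differs_imp_adjacent_or_antipodal:
  "parity x \<noteq> parity y \<Longrightarrow> hamming_nb x y \<or> y = antipode x"
  by (cases x; cases y) (auto simp: hamming_nb_def)

lemma parity_class_eq:
  "{x. parity x = b} = (if b then {(True, False, False), (False, True, False), (False, False, True), (True, True, True)}
     else {(False, False, False), (False, True, True), (True, False, True), (True, True, False)})"
  by auto

lemma independent_set_mixed_parity_subset:
  assumes indep: "\<And>x y. x \<in> S \<Longrightarrow> y \<in> S \<Longrightarrow> \<not> hamming_nb x y"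
    and "x \<in> S" "y \<in> S" "parity x \<noteq> parity y"
  shows "S \<subseteq> {x, y}"
proof
  have y: "y = antipode x"
    using parity_differs_imp_adjacent_or_antipodal indep assms(2-4) by blast
  fix z assume "z \<in> S"
  show "z \<in> {x, y}"
  proof (cases "parity z = parity x")
    case True
    then have "z = antipode y"
      using parity_differs_imp_adjacent_or_antipodal[of y z] indep assms(3,4) \<open>z \<in> S\<close> by auto
    then show ?thesis by (simp add: y)
  next
    case False
    then have "z = antipode x"
      using parity_differs_imp_adjacent_or_antipodal[of x z] indep assms(2) \<open>z \<in> S\<close> by auto
    then show ?thesis by (simp add: y)
  qed
qed

lemma independent_four_states_parity_class:
  fixes S :: "state set"
  assumes card: "card S = 4" and indep: "\<And>x y. x \<in> S \<Longrightarrow> y \<in> S \<Longrightarrow> \<not> hamming_nb x y"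
  obtains b where "S = {x. parity x = b}"
proof -
  from card have "S \<noteq> {}"
    by auto
  then obtain x where "x \<in> S"
    by blast
  have sub: "S \<subseteq> {z. parity z = parity x}"
  proof (rule ccontr)
    assume "\<not> S \<subseteq> {z. parity z = parity x}"
    then obtain y where "y \<in> S" "parity x \<noteq> parity y"
      by blast
    with \<open>x \<in> S\<close> have "card S \<le> card {x, y}"
      by (intro card_mono independent_set_mixed_parity_subset[OF indep]) simp_all
    also have "\<dots> \<le> 2"
      by (simp add: card_insert_if)
    finally show False
      using card by simp
  qed
  moreover have "card {z. parity z = parity x} = 4"
    by (simp add: parity_class_eq)
  ultimately have "S = {z. parity z = parity x}"
    using card by (intro card_subset_eq) (simp_all add: parity_class_eq)
  then show thesis ..
qed

lemma is_mode_flip_first: "is_mode p (i, j, k) \<Longrightarrow> p (\<not> i, j, k) < p (i, j, k)"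
  unfolding is_mode_def hamming_nb_def by auto

lemma slice_minor_signs_of_parity_modes:
  assumes modes: "\<And>x. parity x = b \<Longrightarrow> is_mode p x" and nonneg: "\<And>x. 0 \<le> p x"
  shows "0 < slice_minor p b" "slice_minor p (\<not> b) < 0"
proof -
  have flip: "p (\<not> i, j, k) < p (i, j, k)" if "parity (i, j, k) = b" for i j k
    using is_mode_flip_first modes that by blast
  have "0 < det2 (\<lambda>i. p (i, False, b)) (\<lambda>i. p (i, True, b))"
    using flip[of False False b] flip[of True True b]
    by (intro det2_pos_of_diagonal_dominance) (simp_all add: nonneg)
  then show "0 < slice_minor p b"
    by (simp add: slice_minor_def)
  have "0 < det2 (\<lambda>i. p (i, True, \<not> b)) (\<lambda>i. p (i, False, \<not> b))"
    using flip[of False True "\<not> b"] flip[of True False "\<not> b"]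
    by (intro det2_pos_of_diagonal_dominance) (simp_all add: nonneg)
  then show "slice_minor p (\<not> b) < 0"
    unfolding slice_minor_def using det2_swap by (metis neg_0_less_iff_less)
qed

lemma parity_modes_opposite_signs:
  assumes nonneg: "\<forall>v\<in>{a1, b1, c1, d1, e1, f1, a2, b2, c2, d2, e2, f2}. nonneg2 v"
    and p: "\<And>x. p x = rank2_tensor a1 b1 c1 d1 e1 f1 x * rank2_tensor a2 b2 c2 d2 e2 f2 x"
    and modes: "\<And>x. parity x = b \<Longrightarrow> is_mode p x"
  shows "(det2 a1 d1 * det2 b1 e1) * (det2 a2 d2 * det2 b2 e2) < 0"
proof -
  have "0 \<le> p x" for x
    using nonneg by (simp add: p rank2_tensor_nonneg)
  from slice_minor_signs_of_parity_modes[OF modes this] show ?thesis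
    by (rule product_slice_minors_opposite_signs[OF nonneg p])
qed

lemma RBM32_factors:
  assumes "p \<in> RBM32"
  obtains a1 b1 c1 d1 e1 f1 a2 b2 c2 d2 e2 f2 where
    "\<forall>v\<in>{a1, b1, c1, d1, e1, f1, a2, b2, c2, d2, e2, f2}. nonneg2 v"
    "\<And>x. p x = rank2_tensor a1 b1 c1 d1 e1 f1 x * rank2_tensor a2 b2 c2 d2 e2 f2 x"
proof -
  from assms obtain a1 b1 c1 d1 e1 f1 a2 b2 c2 d2 e2 f2 where
    "nonneg2 a1" "nonneg2 b1" "nonneg2 c1" "nonneg2 d1" "nonneg2 e1" "nonneg2 f1"
    "nonneg2 a2" "nonneg2 b2" "nonneg2 c2" "nonneg2 d2" "nonneg2 e2" "nonneg2 f2" and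
    p: "p = (\<lambda>x. (tens3 a1 b1 c1 x + tens3 d1 e1 f1 x) * (tens3 a2 b2 c2 x + tens3 d2 e2 f2 x))"
    unfolding RBM32_def mem_Collect_eq by (elim exE conjE) (rule that[rotated 12], assumption+)
  then have "\<forall>v\<in>{a1, b1, c1, d1, e1, f1, a2, b2, c2, d2, e2, f2}. nonneg2 v"
    by blast
  moreover have "p x = rank2_tensor a1 b1 c1 d1 e1 f1 x * rank2_tensor a2 b2 c2 d2 e2 f2 x" for x
    by (simp add: p rank2_tensor_def)
  ultimately show thesis
    by (rule that)
qed

theorem corollary4:
  shows "\<not> (\<exists>p \<in> RBM32. \<exists>S :: state set. card S = 4 \<and> (\<forall>x\<in>S. is_mode p x))"
proof
  assume "\<exists>p \<in> RBM32. \<exists>S :: state set. card S = 4 \<and> (\<forall>x\<in>S. is_mode p x)"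
  then obtain p S where "p \<in> RBM32" "card S = 4" and modes_S: "\<forall>x\<in>S. is_mode p x"
    by blast
  from \<open>p \<in> RBM32\<close> obtain a1 b1 c1 d1 e1 f1 a2 b2 c2 d2 e2 f2 where
    nonneg: "\<forall>v\<in>{a1, b1, c1, d1, e1, f1, a2, b2, c2, d2, e2, f2}. nonneg2 v" and
    p: "\<And>x. p x = rank2_tensor a1 b1 c1 d1 e1 f1 x * rank2_tensor a2 b2 c2 d2 e2 f2 x"
    by (rule RBM32_factors) (rule that)
  obtain b where "S = {x. parity x = b}"
    using \<open>card S = 4\<close> modes_S modes_not_adjacent by (metis independent_four_states_parity_class)
  with modes_S have modes: "\<And>x. parity x = b \<Longrightarrow> is_mode p x"
    by blast
  \<comment> \<open>rotating the coordinates brings the other two slice directions into the third position\<close>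
  have modes_rot: "\<And>x. parity x = b \<Longrightarrow> is_mode (p \<circ> rotate3) x"
    by (rule is_mode_rotate3, rule modes) simp
  have modes_rot2: "\<And>x. parity x = b \<Longrightarrow> is_mode (p \<circ> rotate3 \<circ> rotate3) x"
    by (rule is_mode_rotate3, rule modes_rot) simp
  have "(det2 a1 d1 * det2 b1 e1) * (det2 a2 d2 * det2 b2 e2) < 0"
    using nonneg p modes by (rule parity_modes_opposite_signs)
  moreover have "(det2 c1 f1 * det2 a1 d1) * (det2 c2 f2 * det2 a2 d2) < 0"
    by (rule parity_modes_opposite_signs[OF _ _ modes_rot])
      (use nonneg in \<open>simp_all add: p rank2_tensor_rotate3\<close>)
  moreover have "(det2 b1 e1 * det2 c1 f1) * (det2 b2 e2 * det2 c2 f2) < 0"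
    by (rule parity_modes_opposite_signs[OF _ _ modes_rot2])
      (use nonneg in \<open>simp_all add: p rank2_tensor_rotate3\<close>)
  ultimately show False
    by (rule pairwise_products_not_all_neg)
qed

end
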